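(* Let $\mathcal X$ be a finite set with $|\mathcal X|\ge n\ge1$, $s:2^{\mathcal X}\to\mathbb R$ non-negative and monotone, $d$ a metric on $\mathcal X$, $\mathrm{div}$ the associated sum-dispersion, $\lambda>0$, and $\alpha\in(0,1]$. Let $B_n$ be the output of an $\alpha$-approximate greedy run for the set function $\tilde a:=\tfrac12 s+\lambda\,\mathrm{div}$ with cardinality $n$, let $a:=s+\lambda\,\mathrm{div}$, and let $B_n^*\in\arg\max_{B\subseteq\mathcal X,|B|=n}a(B)$. Then $$a(B_n)\ge\frac{\alpha\hat\gamma}{2}\,a(B_n^* ),\qquad\hat\gamma:=\gamma_{B_n^*\cup B_n,n}(s).$$
   Context: Marginal gain: $\Delta_f(x\mid B):=f(B\cup\{x\})-f(B)$ for a set function $f$. $s$ is monotone if $\Delta_s(x\mid B)\ge0$ for all $B$ and $x\notin B$; non-negative if $s(B)\ge0$ for all $B$. Sum-dispersion: $\mathrm{div}(B):=\frac12\sum_{x\in B}\sum_{x'\in B}d(x,x')$. An $\alpha$-approximate greedy run for a set function $f$ with cardinality $n$: $B_0=\emptyset$ and for $i=0,\dots,n-1$ an element $x_i\in\mathcal X\setminus B_i$ is chosen with $\Delta_f(x_i\mid B_i)\ge\alpha\max_{x\in\mathcal X\setminus B_i}\Delta_f(x\mid B_i)$, and $B_{i+1}=B_i\cup\{x_i\}$; its output is $B_n$. Submodularity ratio: $\gamma_{B,n}(s):=\min_{S\subseteq\mathcal X,\ B'\subseteq B\setminus S,\ |S|\le n}\frac{\sum_{x\in S}\Delta_s(x\mid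 B')}{s(B'\cup S)-s(B')}$, with $0/0:=1$ and $c/0:=+\infty$ for $c>0$. *)

theory Defs
  imports Complex_Main "HOL-Library.Extended_Real"
begin

definition marg :: "('a set \<Rightarrow> real) \<Rightarrow> 'a \<Rightarrow> 'a set \<Rightarrow> real" where
  "marg f x B = f (B \<union> {x}) - f B"

definition monotone_sf :: "'a set \<Rightarrow> ('a set \<Rightarrow> real) \<Rightarrow> bool" where
  "monotone_sf X s \<longleftrightarrow> (\<forall>B x. B \<subseteq> X \<longrightarrow> x \<in> X \<longrightarrow> x \<notin> B \<longrightarrow> marg s x B \<ge> 0)"

definition nonneg_sf :: "'a set \<Rightarrow> ('a set \<Rightarrow> real) \<Rightarrow> bool" where
  "nonneg_sf X s \<longleftrightarrow> (\<forall>B. B \<subseteq> X \<longrightarrow> s B \<ge> 0)"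

definition is_metric_on :: "'a set \<Rightarrow> ('a \<Rightarrow> 'a \<Rightarrow> real) \<Rightarrow> bool" where
  "is_metric_on X d \<longleftrightarrow>
     (\<forall>x\<in>X. \<forall>y\<in>X. d x y \<ge> 0 \<and> (d x y = 0 \<longleftrightarrow> x = y) \<and> d x y = d y x) \<and>
     (\<forall>x\<in>X. \<forall>y\<in>X. \<forall>z\<in>X. d x z \<le> d x y + d y z)"

definition dispersion :: "('a \<Rightarrow> 'a \<Rightarrow> real) \<Rightarrow> 'a set \<Rightarrow> real" where
  "dispersion d B = (1/2) * (\<Sum>x\<in>B. \<Sum>x'\<in>B. d x x')"

text \<open>An alpha-approximate greedy run for f with cardinality n, given by its list of
  chosen elements xs = [x_0, ..., x_{n-1}]; B_i = set (take i xs); its output is set xs.\<close>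
definition approx_greedy_run ::
  "'a set \<Rightarrow> ('a set \<Rightarrow> real) \<Rightarrow> real \<Rightarrow> nat \<Rightarrow> 'a list \<Rightarrow> bool" where
  "approx_greedy_run X f \<alpha> n xs \<longleftrightarrow> length xs = n \<and>
     (\<forall>i<n. xs ! i \<in> X - set (take i xs) \<and>
        (\<forall>x\<in>X - set (take i xs).
            marg f (xs ! i) (set (take i xs)) \<ge> \<alpha> * marg f x (set (take i xs))))"

definition ext_ratio :: "real \<Rightarrow> real \<Rightarrow> ereal" where
  "ext_ratio c e = (if e = 0 then (if c = 0 then 1 else if c > 0 then \<infinity> else -\<infinity>)
                    else ereal (c / e))"

definition subm_ratio :: "'a set \<Rightarrow> ('a set \<Rightarrow> real) \<Rightarrow> 'a set \<Rightarrow> nat \<Rightarrow> ereal" where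
  "subm_ratio X s B n = (INF p \<in> {(S, B'). S \<subseteq> X \<and> B' \<subseteq> B - S \<and> card S \<le> n}.
      ext_ratio (\<Sum>x\<in>fst p. marg s x (snd p)) (s (snd p \<union> fst p) - s (snd p)))"

end

theory Submission
  imports Defs
begin

text \<open>Let f = s/2 + \<lambda> div be the greedy objective, B* the optimum, G the set of the first
  i < n greedy choices and C = B* - G, which is nonempty. Averaging the \<alpha>-greedy choice at
  step i over C bounds the i-th gain from below by \<alpha>/|C| times the total gain of C over G.
  The submodularity ratio \<gamma> bounds the s-part of that total from below by
  \<gamma> (s(G \<union> B*) - s(G)); for the dispersion part, the triangle inequality applied to the
  pieces B* \<inter> G, C and G - B* gives i |C| div(B*) \<le> n(n-1) d(C, G), where d(C, G) is the
  sum of all distances between C and G. Summing over i yields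
  f(B_n) \<ge> \<alpha>\<gamma> (s(B*) - s(B_n))/2 + \<alpha>\<lambda> div(B*)/2, and adding s(B_n)/2 gives the claim.\<close>

lemma monotone_sf_marg_nonneg:
  assumes "monotone_sf X s" and "x \<in> X" and "B \<subseteq> X"
  shows "0 \<le> marg s x B"
  using assms unfolding monotone_sf_def marg_def
  by (cases "x \<in> B") (auto simp: insert_absorb)

lemma monotone_sf_sum_marg_nonneg:
  assumes "monotone_sf X s" and "S \<subseteq> X" and "B \<subseteq> X"
  shows "0 \<le> (\<Sum>x\<in>S. marg s x B)"
  using assms by (auto intro!: sum_nonneg monotone_sf_marg_nonneg)

lemma monotone_sf_mono:
  assumes "monotone_sf X s" and "finite C" and "C \<subseteq> X" and "B \<subseteq> C"
  shows "s B \<le> s C"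
proof -
  have "s B \<le> s (B \<union> D)" if "finite D" and "B \<union> D \<subseteq> X" for D
    using that
  proof (induction D rule: finite_induct)
    case empty
    then show ?case by simp
  next
    case (insert x D)
    then have "0 \<le> marg s x (B \<union> D)"
      by (intro monotone_sf_marg_nonneg[OF assms(1)]) auto
    with insert show ?case by (simp add: marg_def)
  qed
  from this[of "C - B"] assms show ?thesis
    by (simp add: Un_absorb1 finite_subset)
qed

lemma ext_ratio_nonneg: "0 \<le> c \<Longrightarrow> 0 \<le> e \<Longrightarrow> 0 \<le> ext_ratio c e"
  by (auto simp: ext_ratio_def)

lemma le_ext_ratio_imp_mult_le:
  assumes "ereal g \<le> ext_ratio c e" and "0 \<le> c" and "0 \<le> e"
  shows "g * e \<le> c"
  using assms by (cases "e = 0") (auto simp: ext_ratio_def pos_le_divide_eq mult.commute)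

lemma subm_ratio_unit_interval:
  assumes "finite X" and "monotone_sf X s" and "B \<subseteq> X"
  obtains g where "subm_ratio X s B n = ereal g" and "0 \<le> g" and "g \<le> 1"
proof -
  let ?I = "{(S, B'). S \<subseteq> X \<and> B' \<subseteq> B - S \<and> card S \<le> n}"
  let ?r = "\<lambda>p. ext_ratio (\<Sum>x\<in>fst p. marg s x (snd p)) (s (snd p \<union> fst p) - s (snd p))"
  \<comment> \<open>The admissible pair (\<emptyset>, \<emptyset>) contributes the ratio 0/0 = 1.\<close>
  have "subm_ratio X s B n \<le> ?r ({}, {})"
    unfolding subm_ratio_def by (rule INF_lower) auto
  then have le1: "subm_ratio X s B n \<le> 1"
    by (simp add: ext_ratio_def)
  have ge0: "0 \<le> subm_ratio X s B n"
    unfolding subm_ratio_def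
  proof (rule INF_greatest)
    fix p assume "p \<in> ?I"
    then obtain S B' where p: "p = (S, B')" "S \<subseteq> X" "B' \<subseteq> B - S"
      by auto
    with assms(3) have "B' \<subseteq> X" by blast
    with p have "s B' \<le> s (B' \<union> S)"
      using assms(1,2) by (intro monotone_sf_mono[of X]) (auto intro: finite_subset)
    with p \<open>B' \<subseteq> X\<close> assms(2) show "0 \<le> ?r p"
      by (auto intro!: ext_ratio_nonneg monotone_sf_sum_marg_nonneg)
  qed
  from le1 ge0 obtain g where "subm_ratio X s B n = ereal g"
    by (cases "subm_ratio X s B n") auto
  with le1 ge0 show thesis
    by (intro that) auto
qed

lemma subm_ratio_mult_le_sum_marg:
  assumes "subm_ratio X s B n = ereal g" and "finite X" and "monotone_sf X s" and "B \<subseteq> X"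
    and "S \<subseteq> X" and "B' \<subseteq> B - S" and "card S \<le> n"
  shows "g * (s (B' \<union> S) - s B') \<le> (\<Sum>x\<in>S. marg s x B')"
proof (rule le_ext_ratio_imp_mult_le)
  show "ereal g \<le> ext_ratio (\<Sum>x\<in>S. marg s x B') (s (B' \<union> S) - s B')"
    unfolding assms(1)[symmetric] subm_ratio_def
    by (rule INF_lower2[of "(S, B')"]) (use assms(5-7) in auto)
  show "0 \<le> (\<Sum>x\<in>S. marg s x B')"
    using assms(3-6) by (intro monotone_sf_sum_marg_nonneg[of X]) auto
  show "0 \<le> s (B' \<union> S) - s B'"
    using assms(2-6) monotone_sf_mono[of X s "B' \<union> S" B'] by (auto intro: finite_subset)
qed

lemma metric_on_nonneg: "is_metric_on X d \<Longrightarrow> x \<in> X \<Longrightarrow> y \<in> X \<Longrightarrow> 0 \<le> d x y"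
  unfolding is_metric_on_def by auto

lemma metric_on_self: "is_metric_on X d \<Longrightarrow> x \<in> X \<Longrightarrow> d x x = 0"
  unfolding is_metric_on_def by auto

lemma metric_on_commute: "is_metric_on X d \<Longrightarrow> x \<in> X \<Longrightarrow> y \<in> X \<Longrightarrow> d x y = d y x"
  unfolding is_metric_on_def by auto

lemma metric_on_triangle:
  "is_metric_on X d \<Longrightarrow> x \<in> X \<Longrightarrow> y \<in> X \<Longrightarrow> z \<in> X \<Longrightarrow> d x z \<le> d x y + d y z"
  unfolding is_metric_on_def by auto

definition cross_dist :: "('a \<Rightarrow> 'a \<Rightarrow> real) \<Rightarrow> 'a set \<Rightarrow> 'a set \<Rightarrow> real" where
  "cross_dist d P Q = (\<Sum>x\<in>P. \<Sum>y\<in>Q. d x y)"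

lemma cross_dist_nonneg:
  "is_metric_on X d \<Longrightarrow> P \<subseteq> X \<Longrightarrow> Q \<subseteq> X \<Longrightarrow> 0 \<le> cross_dist d P Q"
  unfolding cross_dist_def by (auto intro!: sum_nonneg metric_on_nonneg[of X d])

lemma cross_dist_commute:
  assumes "is_metric_on X d" and "P \<subseteq> X" and "Q \<subseteq> X"
  shows "cross_dist d P Q = cross_dist d Q P"
  unfolding cross_dist_def using assms
  by (subst sum.swap) (auto intro!: sum.cong metric_on_commute[of X d])

lemma cross_dist_Un_disjoint:
  "finite A \<Longrightarrow> finite B \<Longrightarrow> A \<inter> B = {} \<Longrightarrow>
    cross_dist d C (A \<union> B) = cross_dist d C A + cross_dist d C B"
  unfolding cross_dist_def by (simp add: sum.union_disjoint sum.distrib)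

lemma dispersion_nonneg: "is_metric_on X d \<Longrightarrow> B \<subseteq> X \<Longrightarrow> 0 \<le> dispersion d B"
  unfolding dispersion_def by (auto intro!: sum_nonneg metric_on_nonneg[of X d])

lemma dispersion_Un_disjoint:
  assumes "is_metric_on X d" and "finite A" and "finite C" and "A \<subseteq> X" and "C \<subseteq> X"
    and "A \<inter> C = {}"
  shows "dispersion d (A \<union> C) = dispersion d A + dispersion d C + cross_dist d C A"
proof -
  have "(\<Sum>x\<in>A \<union> C. \<Sum>y\<in>A \<union> C. d x y)
      = (\<Sum>x\<in>A. \<Sum>y\<in>A. d x y) + (\<Sum>x\<in>C. \<Sum>y\<in>C. d x y) + cross_dist d A C + cross_dist d C A"
    using assms(2,3,6) by (simp add: sum.union_disjoint sum.distrib cross_dist_def)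
  with cross_dist_commute[OF assms(1,4,5)] show ?thesis
    unfolding dispersion_def by simp
qed

lemma marg_dispersion:
  assumes "is_metric_on X d" and "finite B" and "B \<subseteq> X" and "x \<in> X" and "x \<notin> B"
  shows "marg (dispersion d) x B = (\<Sum>y\<in>B. d x y)"
proof -
  have "(\<Sum>y\<in>B. d y x) = (\<Sum>y\<in>B. d x y)"
    using assms by (auto intro!: sum.cong metric_on_commute[of X d])
  with assms have "(\<Sum>u\<in>insert x B. \<Sum>v\<in>insert x B. d u v)
      = 2 * (\<Sum>y\<in>B. d x y) + (\<Sum>u\<in>B. \<Sum>v\<in>B. d u v)"
    by (simp add: sum.distrib metric_on_self[of X d])
  then show ?thesis
    by (simp add: marg_def dispersion_def diff_divide_distrib[symmetric])
qed

lemma dispersion_le_dist_sum: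
  assumes "is_metric_on X d" and "finite P" and "P \<subseteq> X" and "y \<in> X"
  shows "dispersion d P \<le> (real (card P) - 1) * (\<Sum>x\<in>P. d x y)"
proof -
  define S where "S = (\<Sum>x\<in>P. d x y)"
  have S_commute: "(\<Sum>x\<in>P. d y x) = S"
    unfolding S_def using assms by (auto intro!: sum.cong metric_on_commute[of X d])
  have "(\<Sum>x\<in>P. \<Sum>x'\<in>P. d x x') = (\<Sum>x\<in>P. \<Sum>x'\<in>P - {x}. d x x')"
  proof (rule sum.cong[OF refl])
    fix x assume "x \<in> P"
    with assms have "d x x = 0" by (auto intro: metric_on_self)
    with \<open>x \<in> P\<close> assms(2) show "(\<Sum>x'\<in>P. d x x') = (\<Sum>x'\<in>P - {x}. d x x')"
      by (simp add: sum_diff1)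
  qed
  also have "\<dots> \<le> (\<Sum>x\<in>P. \<Sum>x'\<in>P - {x}. d x y + d y x')"
    using assms by (intro sum_mono) (auto intro: metric_on_triangle[of X d])
  also have "\<dots> = (\<Sum>x\<in>P. real (card P) * d x y + S - (d x y + d y x))"
  proof (rule sum.cong[OF refl])
    fix x assume "x \<in> P"
    with assms(2) have "0 < card P"
      using card_gt_0_iff by blast
    with \<open>x \<in> P\<close> assms(2) have "real (card (P - {x})) = real (card P) - 1"
      by (simp add: of_nat_diff)
    with \<open>x \<in> P\<close> assms(2) S_commute
    show "(\<Sum>x'\<in>P - {x}. d x y + d y x') = real (card P) * d x y + S - (d x y + d y x)"
      by (simp add: sum.distrib sum_diff1 algebra_simps)
  qed
  also have "\<dots> = real (card P) * S + real (card P) * S - S - S"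
    using S_commute by (simp add: sum_subtractf sum.distrib S_def flip: sum_distrib_left)
  finally show ?thesis
    unfolding dispersion_def S_def by (simp add: algebra_simps)
qed

lemma card_mult_dispersion_le_cross_dist:
  assumes "is_metric_on X d" and "finite P" and "P \<subseteq> X" and "Y \<subseteq> X"
  shows "real (card Y) * dispersion d P \<le> (real (card P) - 1) * cross_dist d P Y"
proof -
  have "real (card Y) * dispersion d P = (\<Sum>y\<in>Y. dispersion d P)"
    by simp
  also have "\<dots> \<le> (\<Sum>y\<in>Y. (real (card P) - 1) * (\<Sum>x\<in>P. d x y))"
    using assms by (intro sum_mono dispersion_le_dist_sum[of X d]) auto
  also have "\<dots> = (real (card P) - 1) * cross_dist d P Y"
    unfolding cross_dist_def by (simp add: sum_distrib_left sum.swap[of _ Y])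
  finally show ?thesis .
qed

text \<open>Here a, b, c are the sizes of B \<inter> G, G - B, B - G, and dA, dC, dAC, dCR stand for
  div(B \<inter> G), div(B - G), d(B - G, B \<inter> G), d(B - G, G - B); the last three hypotheses are
  the triangle-inequality bounds between these pieces.\<close>

lemma cross_dist_counting_arith:
  fixes a b c i n dA dC dAC dCR :: real
  assumes "0 \<le> dA" and "0 \<le> dC" and "0 \<le> dAC" and "0 \<le> dCR" and "0 \<le> a" and "0 \<le> b"
    and "a + b = i" and "a + c = n" and "i \<le> n"
    and "b * dC \<le> (c - 1) * dCR" and "a * dC \<le> (c - 1) * dAC" and "c * dA \<le> (a - 1) * dAC"
  shows "i * c * (dA + dC + dAC) \<le> n * (n - 1) * (dAC + dCR)"
proof -
  have "i * (c * dA) \<le> i * ((a - 1) * dAC)"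
    using assms(5-7,12) by (intro mult_left_mono) auto
  moreover have "(n - i) * (a * dC) \<le> (n - i) * ((c - 1) * dAC)"
    using assms(9,11) by (intro mult_left_mono) auto
  moreover have "n * (b * dC) \<le> n * ((c - 1) * dCR)"
    using assms(5-10) by (intro mult_left_mono) auto
  moreover have "(c - 1) * ((n - i) * dAC + n * dCR) \<le> (n - 1) * ((n - i) * dAC + n * dCR)"
    using assms by (intro mult_right_mono) auto
  moreover have "(n - i) * (a * dC) + n * (b * dC) = i * c * dC"
    unfolding assms(7,8)[symmetric] by (simp add: algebra_simps)
  moreover have "a * (dAC * i) + c * (dAC * i) = n * (dAC * i)"
    unfolding assms(8)[symmetric] by (simp add: algebra_simps)
  ultimately show ?thesis
    by (simp add: algebra_simps)
qed

lemma card_mult_dispersion_le_cross_dist_Diff: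
  assumes "is_metric_on X d" and "finite B" and "finite G" and "B \<subseteq> X" and "G \<subseteq> X"
    and "card G \<le> card B"
  shows "real (card G) * real (card (B - G)) * dispersion d B
    \<le> real (card B) * (real (card B) - 1) * cross_dist d (B - G) G"
proof -
  define A C R where "A = B \<inter> G" and "C = B - G" and "R = G - B"
  have B: "B = A \<union> C" "A \<inter> C = {}" and G: "G = A \<union> R" "A \<inter> R = {}"
    unfolding A_def C_def R_def by auto
  have fin: "finite A" "finite C" "finite R" and sub: "A \<subseteq> X" "C \<subseteq> X" "R \<subseteq> X"
    using assms(2-5) unfolding A_def C_def R_def by auto
  have card_B: "card A + card C = card B" and card_G: "card A + card R = card G"
    using card_Un_disjoint[OF fin(1,2) B(2)] card_Un_disjoint[OF fin(1,3) G(2)] B(1) G(1)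
    by simp_all
  have "dispersion d B = dispersion d A + dispersion d C + cross_dist d C A"
    using dispersion_Un_disjoint[OF assms(1) fin(1,2) sub(1,2) B(2)] B(1) by simp
  moreover have "cross_dist d C G = cross_dist d C A + cross_dist d C R"
    using cross_dist_Un_disjoint[OF fin(1,3) G(2)] G(1) by simp
  moreover have "real (card G) * real (card C) * (dispersion d A + dispersion d C + cross_dist d C A)
      \<le> real (card B) * (real (card B) - 1) * (cross_dist d C A + cross_dist d C R)"
  proof (rule cross_dist_counting_arith)
    show "real (card R) * dispersion d C \<le> (real (card C) - 1) * cross_dist d C R"
      and "real (card A) * dispersion d C \<le> (real (card C) - 1) * cross_dist d C A"
      using card_mult_dispersion_le_cross_dist[OF assms(1) fin(2) sub(2)] sub by auto
    show "real (card C) * dispersion d A \<le> (real (card A) - 1) * cross_dist d C A"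
      using card_mult_dispersion_le_cross_dist[OF assms(1) fin(1) sub(1,2)]
        cross_dist_commute[OF assms(1) sub(1,2)] by simp
  qed (use assms(1,6) sub card_B card_G in \<open>auto intro: dispersion_nonneg cross_dist_nonneg\<close>)
  ultimately show ?thesis
    unfolding C_def by simp
qed

lemma dispersion_share_le_cross_dist:
  assumes "is_metric_on X d" and "finite B" and "finite G" and "B \<subseteq> X" and "G \<subseteq> X"
    and "card G \<le> card B"
  shows "real (card (B - G)) * (real (card G) / (real (card B) * (real (card B) - 1)))
      * dispersion d B \<le> cross_dist d (B - G) G"
proof (cases "card B \<le> 1")
  case True
  then have "real (card G) / (real (card B) * (real (card B) - 1)) = 0"
    using assms(6) by (cases "card B") auto
  moreover have "0 \<le> cross_dist d (B - G) G"
    using assms(4,5) by (intro cross_dist_nonneg[OF assms(1)]) auto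
  ultimately show ?thesis
    by (metis mult_zero_left mult_zero_right)
next
  case False
  then have N_pos: "0 < real (card B) * (real (card B) - 1)"
    by simp
  from card_mult_dispersion_le_cross_dist_Diff[OF assms] N_pos show ?thesis
    by (simp add: pos_divide_le_eq mult.commute mult.left_commute)
qed

lemma mult_fraction_le_half:
  fixes c n g K T :: real
  assumes "0 < c" and "c \<le> n" and "K \<le> T" and "0 \<le> T" and "0 \<le> g"
  shows "c * (g * K / (2 * n)) \<le> (1/2) * (g * T)"
proof -
  have "c / n * K \<le> T"
  proof (cases "0 \<le> K")
    case True
    with assms(1-3) show ?thesis
      using mult_left_le_one_le[of K "c / n"] by simp
  next
    case False
    with assms(1,2) have "c / n * K \<le> 0"
      by (intro mult_nonneg_nonpos) auto
    with assms(4) show ?thesis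
      by linarith
  qed
  from mult_left_mono[OF this assms(5)] assms(1,2) show ?thesis
    by (simp add: field_simps)
qed

lemma approx_greedy_run_length: "approx_greedy_run X f \<alpha> n xs \<Longrightarrow> length xs = n"
  by (simp add: approx_greedy_run_def)

lemma approx_greedy_run_nth:
  "approx_greedy_run X f \<alpha> n xs \<Longrightarrow> i < n \<Longrightarrow> xs ! i \<in> X - set (take i xs)"
  by (simp add: approx_greedy_run_def)

lemma approx_greedy_run_marg:
  "approx_greedy_run X f \<alpha> n xs \<Longrightarrow> i < n \<Longrightarrow> x \<in> X - set (take i xs) \<Longrightarrow>
    \<alpha> * marg f x (set (take i xs)) \<le> marg f (xs ! i) (set (take i xs))"
  unfolding approx_greedy_run_def by blast

lemma approx_greedy_run_set_subset: "approx_greedy_run X f \<alpha> n xs \<Longrightarrow> set xs \<subseteq> X"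
  by (auto simp: in_set_conv_nth approx_greedy_run_length dest: approx_greedy_run_nth)

lemma approx_greedy_run_distinct:
  assumes "approx_greedy_run X f \<alpha> n xs"
  shows "distinct xs"
proof -
  have "distinct (take i xs)" if "i \<le> n" for i
    using that
  proof (induction i)
    case 0
    then show ?case by simp
  next
    case (Suc i)
    with approx_greedy_run_nth[OF assms, of i] show ?case
      by (simp add: take_Suc_conv_app_nth approx_greedy_run_length[OF assms])
  qed
  with assms show ?thesis
    by (metis approx_greedy_run_length order_refl take_all)
qed

lemma approx_greedy_run_card_take:
  "approx_greedy_run X f \<alpha> n xs \<Longrightarrow> i \<le> n \<Longrightarrow> card (set (take i xs)) = i"
  by (simp add: distinct_card approx_greedy_run_distinct approx_greedy_run_length)

lemma approx_greedy_run_telescope: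
  assumes "approx_greedy_run X f \<alpha> n xs"
  shows "f (set xs) = f {} + (\<Sum>i<n. marg f (xs ! i) (set (take i xs)))"
proof -
  have "(\<Sum>i<n. marg f (xs ! i) (set (take i xs)))
      = (\<Sum>i<n. f (set (take (Suc i) xs)) - f (set (take i xs)))"
    using assms by (intro sum.cong) (auto simp: marg_def take_Suc_conv_app_nth approx_greedy_run_length)
  also have "\<dots> = f (set xs) - f {}"
    using sum_lessThan_telescope[of "\<lambda>i. f (set (take i xs))" n]
    by (simp add: approx_greedy_run_length[OF assms])
  finally show ?thesis
    by simp
qed

lemma sum_marg_dispersion_objective:
  assumes "is_metric_on X d" and "finite G" and "G \<subseteq> X" and "C \<subseteq> X" and "C \<inter> G = {}"
  shows "(\<Sum>x\<in>C. marg (\<lambda>A. c * s A + lam * dispersion d A) x G)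
    = c * (\<Sum>x\<in>C. marg s x G) + lam * cross_dist d C G"
proof -
  have "marg (\<lambda>A. c * s A + lam * dispersion d A) x G = c * marg s x G + lam * (\<Sum>y\<in>G. d x y)"
    if "x \<in> C" for x
  proof -
    from that assms(4,5) have "x \<in> X" "x \<notin> G" by auto
    with marg_dispersion[OF assms(1-3)] show ?thesis
      by (simp add: marg_def algebra_simps)
  qed
  then show ?thesis
    by (simp add: sum.distrib sum_distrib_left cross_dist_def)
qed

lemma dispersion_objective_gain_lower_bound:
  fixes B G :: "'a set"
  assumes "finite X" and "is_metric_on X d" and "monotone_sf X s"
    and "B \<subseteq> X" and "G \<subseteq> X" and "card B = n" and "card G < n"
    and "0 \<le> lam" and "0 \<le> \<alpha>" and "0 \<le> g"
    and ratio: "g * (s (G \<union> B) - s G) \<le> (\<Sum>x\<in>B - G. marg s x G)"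
    and K: "K \<le> s (G \<union> B) - s G"
    and greedy: "\<And>x. x \<in> X - G \<Longrightarrow>
      \<alpha> * marg (\<lambda>A. (1/2) * s A + lam * dispersion d A) x G \<le> m"
  shows "\<alpha> * (g * K / (2 * real n)
      + lam * (real (card G) / (real n * (real n - 1))) * dispersion d B) \<le> m"
proof -
  define f where "f = (\<lambda>A. (1/2) * s A + lam * dispersion d A)"
  define C where "C = B - G"
  define T where "T = s (G \<union> B) - s G"
  define D where "D = dispersion d B"
  have C_X: "C \<subseteq> X" "C \<inter> G = {}"
    using assms(4) unfolding C_def by auto
  have fin: "finite B" "finite G" "finite C"
    using assms(1,4,5) unfolding C_def by (auto intro: finite_subset)
  have "card C \<le> n"
    using card_mono[OF fin(1), of C] assms(6) unfolding C_def by auto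
  moreover have "C \<noteq> {}"
    using card_mono[OF fin(2), of B] assms(6,7) unfolding C_def by auto
  ultimately have C_pos: "0 < real (card C)" and C_le: "real (card C) \<le> real n"
    using fin(3) by auto
  have T_nonneg: "0 \<le> T"
    using monotone_sf_mono[OF assms(3), of "G \<union> B" G] fin assms(4,5) unfolding T_def by auto
  have s_part: "real (card C) * (g * K / (2 * real n)) \<le> (1/2) * (g * T)"
    using mult_fraction_le_half[OF C_pos C_le _ T_nonneg assms(10)] K unfolding T_def by simp
  have d_part: "real (card C) * (real (card G) / (real n * (real n - 1))) * D \<le> cross_dist d C G"
    using dispersion_share_le_cross_dist[OF assms(2) fin(1,2) assms(4,5)] assms(6,7)
    unfolding C_def D_def by simp
  have "\<alpha> * (\<Sum>x\<in>C. marg f x G) = (\<Sum>x\<in>C. \<alpha> * marg f x G)"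
    by (simp add: sum_distrib_left)
  also have "\<dots> \<le> real (card C) * m"
    using greedy assms(4) unfolding C_def f_def by (intro sum_bounded_above) auto
  finally have avg: "\<alpha> * (\<Sum>x\<in>C. marg f x G) \<le> real (card C) * m" .
  have "G \<union> B = G \<union> C"
    unfolding C_def by auto
  then have ratio_C: "g * T \<le> (\<Sum>x\<in>C. marg s x G)"
    using ratio unfolding T_def C_def by simp
  have "real (card C)
        * (\<alpha> * (g * K / (2 * real n) + lam * (real (card G) / (real n * (real n - 1))) * D))
      = \<alpha> * (real (card C) * (g * K / (2 * real n))
        + lam * (real (card C) * (real (card G) / (real n * (real n - 1))) * D))"
    by (simp add: algebra_simps)
  also have "\<dots> \<le> \<alpha> * ((1/2) * (g * T) + lam * cross_dist d C G)"
    using s_part d_part assms(8,9) by (intro mult_left_mono add_mono) auto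
  also have "\<dots> \<le> \<alpha> * (\<Sum>x\<in>C. marg f x G)"
    using sum_marg_dispersion_objective[OF assms(2) fin(2) assms(5) C_X, of "1/2" s lam] ratio_C
      assms(9) unfolding f_def by (intro mult_left_mono) auto
  also have "\<dots> \<le> real (card C) * m"
    by (rule avg)
  finally show ?thesis
    using C_pos unfolding D_def by (simp only: mult_le_cancel_left_pos)
qed

lemma sum_of_nat_lessThan: "(\<Sum>i<n. real i) = real n * (real n - 1) / 2"
  by (induction n) (auto simp: field_simps)

lemma sum_greedy_gain_bounds:
  assumes "1 \<le> n" and "n = 1 \<Longrightarrow> D = 0"
  shows "(\<Sum>i<n. \<alpha> * (g * K / (2 * real n) + lam * (real i / (real n * (real n - 1))) * D))
    = \<alpha> * g * K / 2 + \<alpha> * lam * D / 2"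
proof -
  have D_sum: "(\<Sum>i<n. lam * (real i / (real n * (real n - 1))) * D) = lam * D / 2"
  proof (cases "n = 1")
    \<comment> \<open>Then the coefficient divides by zero, but D vanishes.\<close>
    case True
    with assms(2) show ?thesis
      by simp
  next
    case False
    with assms(1) have N: "real n * (real n - 1) \<noteq> 0"
      by simp
    have "(\<Sum>i<n. lam * (real i / (real n * (real n - 1))) * D)
        = lam * D / (real n * (real n - 1)) * (\<Sum>i<n. real i)"
      unfolding sum_distrib_left by (rule sum.cong) simp_all
    with N show ?thesis
      by (simp add: sum_of_nat_lessThan)
  qed
  have "(\<Sum>i<n. \<alpha> * (g * K / (2 * real n) + lam * (real i / (real n * (real n - 1))) * D))
      = real n * (\<alpha> * (g * K / (2 * real n)))
        + \<alpha> * (\<Sum>i<n. lam * (real i / (real n * (real n - 1))) * D)"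
    by (simp add: sum.distrib distrib_left sum_distrib_left)
  also have "\<dots> = \<alpha> * g * K / 2 + \<alpha> * lam * D / 2"
    unfolding D_sum using assms(1) by simp
  finally show ?thesis .
qed

lemma approx_greedy_run_dispersion_objective:
  fixes xs :: "'a list" and B :: "'a set"
  assumes "finite X" and "is_metric_on X d" and "monotone_sf X s" and "nonneg_sf X s"
    and run: "approx_greedy_run X (\<lambda>A. (1/2) * s A + lam * dispersion d A) \<alpha> n xs"
    and "B \<subseteq> X" and "card B = n" and "1 \<le> n" and "0 \<le> lam" and "0 \<le> \<alpha>" and "0 \<le> g"
    and ratio: "\<And>G. G \<subseteq> set xs \<Longrightarrow> g * (s (G \<union> B) - s G) \<le> (\<Sum>x\<in>B - G. marg s x G)"
  shows "\<alpha> * g * (s B - s (set xs)) / 2 + \<alpha> * lam * dispersion d B / 2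
    \<le> (1/2) * s (set xs) + lam * dispersion d (set xs)"
proof -
  define f where "f = (\<lambda>A. (1/2) * s A + lam * dispersion d A)"
  define K where "K = s B - s (set xs)"
  define D where "D = dispersion d B"
  have xs_X: "set xs \<subseteq> X"
    by (rule approx_greedy_run_set_subset[OF run])
  have gain: "\<alpha> * (g * K / (2 * real n) + lam * (real i / (real n * (real n - 1))) * D)
      \<le> marg f (xs ! i) (set (take i xs))" if "i < n" for i
  proof -
    let ?G = "set (take i xs)"
    have G_xs: "?G \<subseteq> set xs"
      by (rule set_take_subset)
    have G_X: "?G \<subseteq> X"
      using G_xs xs_X by blast
    have fin: "finite (?G \<union> B)" "finite (set xs)"
      using assms(1,6) xs_X by (auto intro: finite_subset)
    have "K \<le> s (?G \<union> B) - s ?G"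
      using monotone_sf_mono[OF assms(3) fin(1), of B] monotone_sf_mono[OF assms(3) fin(2), of ?G]
        assms(6) xs_X G_xs G_X unfolding K_def by auto
    moreover have "card ?G = i"
      using approx_greedy_run_card_take[OF run] that by simp
    ultimately show ?thesis
      using dispersion_objective_gain_lower_bound[OF assms(1-3,6) _ assms(7) _ assms(9-11)
          ratio[OF G_xs]] approx_greedy_run_marg[OF run that] G_xs xs_X that
      unfolding f_def D_def by auto
  qed
  have "D = 0" if "n = 1"
  proof -
    from that assms(7) obtain v where "B = {v}"
      using card_1_singletonE by blast
    with assms(2,6) show ?thesis
      unfolding D_def dispersion_def by (simp add: metric_on_self)
  qed
  with assms(8) have "\<alpha> * g * K / 2 + \<alpha> * lam * D / 2
      = (\<Sum>i<n. \<alpha> * (g * K / (2 * real n) + lam * (real i / (real n * (real n - 1))) * D))"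
    by (rule sum_greedy_gain_bounds[symmetric])
  also have "\<dots> \<le> (\<Sum>i<n. marg f (xs ! i) (set (take i xs)))"
    by (intro sum_mono gain) simp
  also have "\<dots> = f (set xs) - f {}"
    using approx_greedy_run_telescope[OF run[folded f_def]] by simp
  also have "\<dots> \<le> f (set xs)"
    using assms(4) unfolding f_def nonneg_sf_def dispersion_def by simp
  finally show ?thesis
    unfolding f_def K_def D_def by simp
qed

theorem mainTheorem11:
  fixes X :: "'a set" and s :: "'a set \<Rightarrow> real" and d :: "'a \<Rightarrow> 'a \<Rightarrow> real"
    and lam \<alpha> :: real and n :: nat and xs :: "'a list" and Bstar :: "'a set"
  assumes "finite X" and "1 \<le> n" and "n \<le> card X"
    and "nonneg_sf X s" and "monotone_sf X s"
    and "is_metric_on X d"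
    and "lam > 0" and "0 < \<alpha>" and "\<alpha> \<le> 1"
    and "approx_greedy_run X (\<lambda>B. (1/2) * s B + lam * dispersion d B) \<alpha> n xs"
    and "Bstar \<subseteq> X" and "card Bstar = n"
    and "\<forall>B. B \<subseteq> X \<and> card B = n \<longrightarrow>
           s B + lam * dispersion d B \<le> s Bstar + lam * dispersion d Bstar"
  shows "ereal (s (set xs) + lam * dispersion d (set xs)) \<ge>
           ereal (\<alpha> / 2) * subm_ratio X s (Bstar \<union> set xs) n
             * ereal (s Bstar + lam * dispersion d Bstar)"
proof -
  have xs_X: "set xs \<subseteq> X"
    by (rule approx_greedy_run_set_subset[OF assms(10)])
  then have union_X: "Bstar \<union> set xs \<subseteq> X"
    using assms(11) by simp
  obtain g where g: "subm_ratio X s (Bstar \<union> set xs) n = ereal g" "0 \<le> g" "g \<le> 1"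
    using subm_ratio_unit_interval[OF assms(1,5) union_X] by blast
  have ratio: "g * (s (G \<union> Bstar) - s G) \<le> (\<Sum>x\<in>Bstar - G. marg s x G)" if "G \<subseteq> set xs" for G
  proof -
    have "card (Bstar - G) \<le> n"
      using assms(1,11,12) by (metis card_mono Diff_subset finite_subset)
    with that have "g * (s (G \<union> (Bstar - G)) - s G) \<le> (\<Sum>x\<in>Bstar - G. marg s x G)"
      using assms(11) by (intro subm_ratio_mult_le_sum_marg[OF g(1) assms(1,5) union_X]) auto
    then show ?thesis
      by simp
  qed
  have bound: "\<alpha> * g * (s Bstar - s (set xs)) / 2 + \<alpha> * lam * dispersion d Bstar / 2
      \<le> (1/2) * s (set xs) + lam * dispersion d (set xs)"
    using approx_greedy_run_dispersion_objective[OF assms(1,6,5,4,10,11,12,2)] assms(7,8) g(2) ratio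
    by simp
  have "\<alpha> * g * s (set xs) \<le> s (set xs)"
    using assms(4,8,9) g xs_X by (simp add: nonneg_sf_def mult_le_one mult_left_le_one_le)
  moreover have "0 \<le> \<alpha> * lam * dispersion d Bstar * (1 - g)"
    using assms(7,8) g(3) dispersion_nonneg[OF assms(6,11)] by simp
  moreover have "\<alpha> / 2 * g * (s Bstar + lam * dispersion d Bstar)
      = \<alpha> * g * (s Bstar - s (set xs)) / 2 + \<alpha> * lam * dispersion d Bstar / 2
        + \<alpha> * g * s (set xs) / 2 - \<alpha> * lam * dispersion d Bstar * (1 - g) / 2"
    by (simp add: field_simps)
  ultimately have "\<alpha> / 2 * g * (s Bstar + lam * dispersion d Bstar)
      \<le> s (set xs) + lam * dispersion d (set xs)"
    using bound by linarith
  with g(1) show ?thesis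
    by simp
qed

end
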